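(* Let $\Phi=\forall u_1\ldots\forall u_n\exists e_1(D_1)\ldots\exists e_m(D_m).\varphi$ be a DQBF with existential variables $E$, and let $<_E$ be a linear ordering of $E$. Then $\Phi$ is true if and only if for each $e\in E$ there is a propositional formula $\psi_e$ with $\mathit{var}(\psi_e)\subseteq D(e)\cup\{x\in E\mid D(x)\subseteq D(e),\ x<_E e\}$ such that $\neg\varphi\wedge\bigwedge_{e\in E}(e\leftrightarrow\psi_e)$ is unsatisfiable.
   Context: For a set $V$ of variables, $[V]$ is the set of all assignments $V\to\{\textsc{true},\textsc{false}\}$, and $\sigma|_W$ denotes restriction. A DQBF in prenex CNF is $\Phi=\forall u_1\ldots\forall u_n\exists e_1(D_1)\ldots\exists e_m(D_m).\varphi$ where all $u_i,e_j$ are pairwise distinct variables, $U=\{u_1,\dots,u_n\}$, $E=\{e_1,\dots,e_m\}$, each $D_j\subseteq U$ is the dependency set $D(e_j)$, and $\varphi$ is a CNF with $\mathit{var}(\varphi)\subseteq U\cup E$. A model of $\Phi$ is a family $F=(f_e)_{e\in E}$ of functions $f_e:[D(e)]\to\{\textsc{true},\textsc{false}\}$ such that for every $\sigma\in[U]$ the assignment $\sigma\cup F(\sigma)$ satisfies $\varphi$, where $F(\sigma)$ assigns each $e\in E$ the value $f_e(\sigma|_{D(e)})$. $\Phi$ is true if it has a model and false otherwise. *)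

theory Defs
  imports Main
begin

(* Literals: (v, True) is the positive literal v, (v, False) is \<not>v.
   A clause is a finite set of literals, a CNF a finite set of clauses. *)
type_synonym 'v lit = "'v \<times> bool"
type_synonym 'v clause = "'v lit set"
type_synonym 'v cnf = "'v clause set"

definition lit_sat :: "('v \<Rightarrow> bool) \<Rightarrow> 'v lit \<Rightarrow> bool" where
  "lit_sat \<alpha> l \<longleftrightarrow> \<alpha> (fst l) = snd l"

definition cnf_sat :: "('v \<Rightarrow> bool) \<Rightarrow> 'v cnf \<Rightarrow> bool" where
  "cnf_sat \<alpha> \<phi> \<longleftrightarrow> (\<forall>C\<in>\<phi>. \<exists>l\<in>C. lit_sat \<alpha> l)"

definition cnf_vars :: "'v cnf \<Rightarrow> 'v set" where
  "cnf_vars \<phi> = (\<Union>C\<in>\<phi>. fst ` C)"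

datatype 'v pform = PVar 'v | PTrue | PFalse | PNot "'v pform"
  | PAnd "'v pform" "'v pform" | POr "'v pform" "'v pform"

primrec peval :: "('v \<Rightarrow> bool) \<Rightarrow> 'v pform \<Rightarrow> bool" where
  "peval \<alpha> (PVar v) = \<alpha> v"
| "peval \<alpha> PTrue = True"
| "peval \<alpha> PFalse = False"
| "peval \<alpha> (PNot f) = (\<not> peval \<alpha> f)"
| "peval \<alpha> (PAnd f g) = (peval \<alpha> f \<and> peval \<alpha> g)"
| "peval \<alpha> (POr f g) = (peval \<alpha> f \<or> peval \<alpha> g)"

primrec pvars :: "'v pform \<Rightarrow> 'v set" where
  "pvars (PVar v) = {v}"
| "pvars PTrue = {}"
| "pvars PFalse = {}"
| "pvars (PNot f) = pvars f"
| "pvars (PAnd f g) = pvars f \<union> pvars g"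
| "pvars (POr f g) = pvars f \<union> pvars g"

(* A DQBF  \<forall>U \<exists>e(D e)_{e\<in>E}. \<phi>  with finite pairwise distinct variables *)
definition wf_dqbf :: "'v set \<Rightarrow> 'v set \<Rightarrow> ('v \<Rightarrow> 'v set) \<Rightarrow> 'v cnf \<Rightarrow> bool" where
  "wf_dqbf U E D \<phi> \<longleftrightarrow> finite U \<and> finite E \<and> U \<inter> E = {} \<and>
     (\<forall>e\<in>E. D e \<subseteq> U) \<and> finite \<phi> \<and> (\<forall>C\<in>\<phi>. finite C) \<and> cnf_vars \<phi> \<subseteq> U \<union> E"

(* A model: for each e\<in>E a function f_e of assignments that depends only on
   the restriction to D(e) (i.e. a function [D(e)] \<rightarrow> bool). *)
definition is_model ::
  "'v set \<Rightarrow> 'v set \<Rightarrow> ('v \<Rightarrow> 'v set) \<Rightarrow> 'v cnf \<Rightarrow> ('v \<Rightarrow> ('v \<Rightarrow> bool) \<Rightarrow> bool) \<Rightarrow> bool" where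
  "is_model U E D \<phi> F \<longleftrightarrow>
     (\<forall>e\<in>E. \<forall>\<sigma> \<sigma>'. (\<forall>u\<in>D e. \<sigma> u = \<sigma>' u) \<longrightarrow> F e \<sigma> = F e \<sigma>') \<and>
     (\<forall>\<sigma>. cnf_sat (\<lambda>v. if v \<in> E then F v \<sigma> else \<sigma> v) \<phi>)"

definition dqbf_true :: "'v set \<Rightarrow> 'v set \<Rightarrow> ('v \<Rightarrow> 'v set) \<Rightarrow> 'v cnf \<Rightarrow> bool" where
  "dqbf_true U E D \<phi> \<longleftrightarrow> (\<exists>F. is_model U E D \<phi> F)"

end

theory Submission
  imports Defs
begin

text \<open>
  If \<open>\<Phi>\<close> has a model, every Skolem function \<open>f\<^sub>e\<close> depends only on the finite set \<open>D(e)\<close> and is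
  therefore expressed by a formula \<open>\<psi>\<^sub>e\<close> over \<open>D(e)\<close>; an assignment satisfying all definitions
  \<open>e \<leftrightarrow> \<psi>\<^sub>e\<close> is then of the form \<open>\<sigma> \<union> F(\<sigma>)\<close> and satisfies \<open>\<phi>\<close>.
  Conversely, the definitions \<open>e \<leftrightarrow> \<psi>\<^sub>e\<close> only refer to existential variables that are smaller
  with respect to the well-founded order \<open><\<^sub>E\<close>, so every assignment \<open>\<sigma>\<close> of the remaining
  variables extends, by well-founded recursion, to an assignment satisfying all of them.
  Reading off the values of the existential variables yields Skolem functions, and well-founded
  induction shows that the value of \<open>e\<close> only depends on \<open>D(e)\<close>, because every existential
  variable \<open>x\<close> occurring in \<open>\<psi>\<^sub>e\<close> has \<open>D(x) \<subseteq> D(e)\<close>.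
\<close>

definition depends_only_on :: "'v set \<Rightarrow> (('v \<Rightarrow> bool) \<Rightarrow> 'b) \<Rightarrow> bool" where
  "depends_only_on S g \<longleftrightarrow> (\<forall>\<sigma> \<sigma>'. (\<forall>u\<in>S. \<sigma> u = \<sigma>' u) \<longrightarrow> g \<sigma> = g \<sigma>')"

lemma is_model_iff:
  "is_model U E D \<phi> F \<longleftrightarrow>
     (\<forall>e\<in>E. depends_only_on (D e) (F e)) \<and>
     (\<forall>\<sigma>. cnf_sat (\<lambda>v. if v \<in> E then F v \<sigma> else \<sigma> v) \<phi>)"
  unfolding is_model_def depends_only_on_def ..

lemma peval_cong: "(\<And>v. v \<in> pvars f \<Longrightarrow> \<alpha> v = \<beta> v) \<Longrightarrow> peval \<alpha> f = peval \<beta> f"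
  by (induction f) auto

lemma depends_only_on_fun_upd:
  assumes "depends_only_on (insert x S) g"
  shows "depends_only_on S (\<lambda>\<alpha>. g (\<alpha>(x := b)))"
  using assms unfolding depends_only_on_def by simp

lemma ex_pform_of_fun:
  assumes "finite S" and "depends_only_on S g"
  shows "\<exists>\<psi>. pvars \<psi> \<subseteq> S \<and> (\<forall>\<alpha>. peval \<alpha> \<psi> = g \<alpha>)"
  using assms
proof (induction S arbitrary: g rule: finite_induct)
  case empty
  then have "g = (\<lambda>_. g (\<lambda>_. False))"
    by (auto simp: depends_only_on_def)
  then show ?case
    by (cases "g (\<lambda>_. False)") (auto intro: exI[of _ PTrue] exI[of _ PFalse])
next
  case (insert x S)
  obtain p1 where p1: "pvars p1 \<subseteq> S" "\<And>\<alpha>. peval \<alpha> p1 = g (\<alpha>(x := True))"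
    using insert.IH[OF depends_only_on_fun_upd[OF insert.prems]] by blast
  obtain p0 where p0: "pvars p0 \<subseteq> S" "\<And>\<alpha>. peval \<alpha> p0 = g (\<alpha>(x := False))"
    using insert.IH[OF depends_only_on_fun_upd[OF insert.prems]] by blast
  have "peval \<alpha> (POr (PAnd (PVar x) p1) (PAnd (PNot (PVar x)) p0)) = g \<alpha>" for \<alpha>
    using p0(2)[of \<alpha>] p1(2)[of \<alpha>] by (cases "\<alpha> x") (simp_all add: fun_upd_idem)
  moreover have "pvars (POr (PAnd (PVar x) p1) (PAnd (PNot (PVar x)) p0)) \<subseteq> insert x S"
    using p0(1) p1(1) by auto
  ultimately show ?case by blast
qed

definition solves_defs :: "'v set \<Rightarrow> ('v \<Rightarrow> 'v pform) \<Rightarrow> ('v \<Rightarrow> bool) \<Rightarrow> ('v \<Rightarrow> bool) \<Rightarrow> bool" where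
  "solves_defs E \<psi> \<sigma> \<alpha> \<longleftrightarrow> (\<forall>v. v \<notin> E \<longrightarrow> \<alpha> v = \<sigma> v) \<and> (\<forall>e\<in>E. \<alpha> e = peval \<alpha> (\<psi> e))"

lemma ex_solves_defs:
  fixes \<psi> :: "'v \<Rightarrow> 'v pform"
  assumes "wf R" and acyclic_defs: "\<And>e v. e \<in> E \<Longrightarrow> v \<in> pvars (\<psi> e) \<Longrightarrow> v \<in> E \<Longrightarrow> (v, e) \<in> R"
  shows "\<exists>\<alpha>. solves_defs E \<psi> \<sigma> \<alpha>"
proof -
  define ext where "ext f = (\<lambda>v. if v \<in> E then f v else \<sigma> v)" for f
  define g where "g = wfrec R (\<lambda>f e. peval (ext f) (\<psi> e))"
  have "ext g e = peval (ext g) (\<psi> e)" if "e \<in> E" for e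
  proof -
    have "g e = peval (ext (cut g R e)) (\<psi> e)"
      unfolding g_def by (subst wfrec[OF \<open>wf R\<close>]) simp
    also have "\<dots> = peval (ext g) (\<psi> e)"
    proof (rule peval_cong)
      fix v assume "v \<in> pvars (\<psi> e)"
      then show "ext (cut g R e) v = ext g v"
        using acyclic_defs[OF that] by (simp add: ext_def cut_apply)
    qed
    finally show ?thesis using that by (simp add: ext_def)
  qed
  then have "solves_defs E \<psi> \<sigma> (ext g)"
    unfolding solves_defs_def by (simp add: ext_def)
  then show ?thesis by blast
qed

lemma solves_defs_depends_only_on:
  fixes A :: "('v \<Rightarrow> bool) \<Rightarrow> 'v \<Rightarrow> bool"
  assumes "wf R"
    and below: "\<And>e v. e \<in> E \<Longrightarrow> v \<in> pvars (\<psi> e) \<Longrightarrow> v \<in> E \<Longrightarrow> (v, e) \<in> R \<and> S v \<subseteq> S e"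
    and outside: "\<And>e v. e \<in> E \<Longrightarrow> v \<in> pvars (\<psi> e) \<Longrightarrow> v \<notin> E \<Longrightarrow> v \<in> S e"
    and sol: "\<And>\<sigma>. solves_defs E \<psi> \<sigma> (A \<sigma>)"
    and "e \<in> E"
  shows "depends_only_on (S e) (\<lambda>\<sigma>. A \<sigma> e)"
  using \<open>wf R\<close> \<open>e \<in> E\<close>
proof (induction e rule: wf_induct_rule)
  case (less e)
  show ?case
    unfolding depends_only_on_def
  proof (intro allI impI)
    fix \<sigma> \<sigma>' :: "'v \<Rightarrow> bool"
    assume agree: "\<forall>u\<in>S e. \<sigma> u = \<sigma>' u"
    have "peval (A \<sigma>) (\<psi> e) = peval (A \<sigma>') (\<psi> e)"
    proof (rule peval_cong)
      fix v assume v: "v \<in> pvars (\<psi> e)"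
      show "A \<sigma> v = A \<sigma>' v"
      proof (cases "v \<in> E")
        case True
        with below[OF less.prems v] less.IH
        have "depends_only_on (S v) (\<lambda>\<sigma>. A \<sigma> v)" and "S v \<subseteq> S e"
          by auto
        with agree show ?thesis
          unfolding depends_only_on_def by blast
      next
        case False
        with outside[OF less.prems v] sol agree show ?thesis
          by (simp add: solves_defs_def)
      qed
    qed
    with sol less.prems show "A \<sigma> e = A \<sigma>' e"
      by (simp add: solves_defs_def)
  qed
qed

lemma dqbf_true_imp_defs:
  assumes "wf_dqbf U E D \<phi>" and "dqbf_true U E D \<phi>"
  shows "\<exists>\<psi>. (\<forall>e\<in>E. pvars (\<psi> e) \<subseteq> D e) \<and>
    (\<forall>\<alpha>. (\<forall>e\<in>E. \<alpha> e = peval \<alpha> (\<psi> e)) \<longrightarrow> cnf_sat \<alpha> \<phi>)"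
proof -
  obtain F where F: "is_model U E D \<phi> F"
    using assms(2) unfolding dqbf_true_def ..
  have "\<forall>e\<in>E. \<exists>p. pvars p \<subseteq> D e \<and> (\<forall>\<alpha>. peval \<alpha> p = F e \<alpha>)"
  proof
    fix e assume "e \<in> E"
    with assms(1) have "finite (D e)"
      unfolding wf_dqbf_def by (meson finite_subset)
    with F \<open>e \<in> E\<close> show "\<exists>p. pvars p \<subseteq> D e \<and> (\<forall>\<alpha>. peval \<alpha> p = F e \<alpha>)"
      by (intro ex_pform_of_fun) (auto simp: is_model_iff)
  qed
  then obtain \<psi> where \<psi>: "\<forall>e\<in>E. pvars (\<psi> e) \<subseteq> D e \<and> (\<forall>\<alpha>. peval \<alpha> (\<psi> e) = F e \<alpha>)"
    by metis
  have "cnf_sat \<alpha> \<phi>" if "\<forall>e\<in>E. \<alpha> e = peval \<alpha> (\<psi> e)" for \<alpha>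
  proof -
    have "(\<lambda>v. if v \<in> E then F v \<alpha> else \<alpha> v) = \<alpha>"
      using that \<psi> by auto
    with F show ?thesis
      unfolding is_model_def by metis
  qed
  with \<psi> show ?thesis by blast
qed

lemma defs_imp_dqbf_true:
  assumes "wf_dqbf U E D \<phi>" and "wf R"
    and vars: "\<forall>e\<in>E. pvars (\<psi> e) \<subseteq> D e \<union> {x \<in> E. D x \<subseteq> D e \<and> (x, e) \<in> R}"
    and sat: "\<forall>\<alpha>. (\<forall>e\<in>E. \<alpha> e = peval \<alpha> (\<psi> e)) \<longrightarrow> cnf_sat \<alpha> \<phi>"
  shows "dqbf_true U E D \<phi>"
proof -
  have D_outside: "D e \<inter> E = {}" if "e \<in> E" for e
    using assms(1) that unfolding wf_dqbf_def by blast
  have below: "(v, e) \<in> R \<and> D v \<subseteq> D e" if "e \<in> E" "v \<in> pvars (\<psi> e)" "v \<in> E" for e v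
    using vars D_outside that by blast
  obtain A where A: "\<And>\<sigma>. solves_defs E \<psi> \<sigma> (A \<sigma>)"
    using ex_solves_defs[OF \<open>wf R\<close>, of E \<psi>] below by metis
  have "is_model U E D \<phi> (\<lambda>e \<sigma>. A \<sigma> e)"
    unfolding is_model_iff
  proof (intro conjI ballI allI)
    fix e assume "e \<in> E"
    show "depends_only_on (D e) (\<lambda>\<sigma>. A \<sigma> e)"
      by (rule solves_defs_depends_only_on[OF \<open>wf R\<close> below _ A \<open>e \<in> E\<close>])
        (use vars in auto)
  next
    fix \<sigma>
    have "(\<lambda>v. if v \<in> E then A \<sigma> v else \<sigma> v) = A \<sigma>"
      using A[of \<sigma>] by (auto simp: solves_defs_def)
    with A[of \<sigma>] sat show "cnf_sat (\<lambda>v. if v \<in> E then A \<sigma> v else \<sigma> v) \<phi>"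
      by (simp add: solves_defs_def)
  qed
  then show ?thesis
    unfolding dqbf_true_def by blast
qed

lemma wf_finite_strict_order:
  assumes "finite r" and "trans r" and "irrefl r"
  shows "wf r"
  using assms by (simp add: finite_acyclic_wf acyclic_irrefl trancl_id)

theorem lemma3:
  fixes U E :: "'v set" and D :: "'v \<Rightarrow> 'v set" and \<phi> :: "'v cnf"
    and lt :: "'v rel"
  assumes "wf_dqbf U E D \<phi>"
    and "strict_linear_order_on E lt"
    and "lt \<subseteq> E \<times> E"
  shows "dqbf_true U E D \<phi> \<longleftrightarrow>
    (\<exists>\<psi> :: 'v \<Rightarrow> 'v pform.
       (\<forall>e\<in>E. pvars (\<psi> e) \<subseteq> D e \<union> {x \<in> E. D x \<subseteq> D e \<and> (x, e) \<in> lt}) \<and>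
       \<not> (\<exists>\<alpha>. \<not> cnf_sat \<alpha> \<phi> \<and> (\<forall>e\<in>E. \<alpha> e = peval \<alpha> (\<psi> e))))"
proof -
  have "finite lt"
    using assms(1,3) unfolding wf_dqbf_def by (meson finite_SigmaI finite_subset)
  then have "wf lt"
    using assms(2) by (intro wf_finite_strict_order) (auto simp: strict_linear_order_on_def)
  show ?thesis
  proof
    assume "dqbf_true U E D \<phi>"
    then show "\<exists>\<psi>. (\<forall>e\<in>E. pvars (\<psi> e) \<subseteq> D e \<union> {x \<in> E. D x \<subseteq> D e \<and> (x, e) \<in> lt}) \<and>
       \<not> (\<exists>\<alpha>. \<not> cnf_sat \<alpha> \<phi> \<and> (\<forall>e\<in>E. \<alpha> e = peval \<alpha> (\<psi> e)))"
      using dqbf_true_imp_defs[OF assms(1)] by blast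
  qed (use defs_imp_dqbf_true[OF assms(1) \<open>wf lt\<close>] in blast)
qed

end
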